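(* Let $\Bbbk$ be a field, $n\ge2$, $q\in\Bbbk$ a primitive $n$-th root of unity, $T_n(q)$ the Taft algebra and $A$ a unital associative $\Bbbk$-algebra. Let $\cdot:\Bbbk C_n\otimes A\to A$ be a partial action of $\Bbbk C_n$ on $A$ with $g\cdot1_A=0$. Then for each $w\in A$ such that $w^n\in Z(A)$ and $g^i\cdot w=q^{-i}(g^i\cdot1_A)w$ for all $0\le i\le n-1$, the linear map $\cdot:T_n(q)\otimes A\to A$ defined by $$g^ix^j\cdot a=q^{-ij}\sum_{k=0}^{j}(-1)^kq^{-\frac{k(k-1)}{2}}\binom{j}{k}_{q^{-1}}w^{j-k}(g^{i+k}\cdot a)w^k\qquad(0\le i,j\le n-1,\ a\in A)$$ is a partial action of $T_n(q)$ on $A$.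
   Context: The Taft algebra $T_n(q)$ is the Hopf algebra generated by $g,x$ with relations $g^n=1$, $x^n=0$, $xg=qgx$, basis $\{g^ix^j:0\le i,j<n\}$, $g$ group-like, $\Delta(x)=x\otimes1+g\otimes x$, $\varepsilon(x)=0$. $\Bbbk C_n=\mathrm{span}\{1,g,\dots,g^{n-1}\}\subseteq T_n(q)$ is the group algebra of the cyclic group $C_n=\langle g\rangle$; exponents of $g$ are read modulo $n$. $Z(A)$ is the center of $A$. A partial action of a bialgebra $H$ on $A$ is a linear map $\cdot:H\otimes A\to A$ with $1_H\cdot a=a$, $h\cdot(ab)=(h_1\cdot a)(h_2\cdot b)$, $h\cdot(k\cdot a)=(h_1\cdot1_A)(h_2k\cdot a)$. $q$-binomials: $\binom{0}{0}_p=1$, $\binom{N}{m}_p=0$ if $m>N$ or $m<0$, and $\binom{N}{m}_p=\binom{N-1}{m-1}_p+p^m\binom{N-1}{m}_p$ for $N\ge1$, $0\le m\le N$. *)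

theory Defs
  imports Main
begin

definition kalgebra :: "('k::field \<Rightarrow> 'a::ring_1 \<Rightarrow> 'a) \<Rightarrow> bool" where
  "kalgebra sm \<longleftrightarrow>
     (\<forall>s t a. sm (s + t) a = sm s a + sm t a) \<and>
     (\<forall>s a b. sm s (a + b) = sm s a + sm s b) \<and>
     (\<forall>s t a. sm (s * t) a = sm s (sm t a)) \<and>
     (\<forall>a. sm 1 a = a) \<and>
     (\<forall>s a b. sm s (a * b) = sm s a * b) \<and>
     (\<forall>s a b. sm s (a * b) = a * sm s b)"

text \<open>Partial action of a bialgebra H with finite basis B, given by structure constants:
  mult b1 b2 e = coefficient of e in b1*b2; unit e = coefficient of e in 1_H;
  comult b b1 b2 = coefficient of b1 \<otimes> b2 in \<Delta>(b).
  The linear map H \<otimes> A \<rightarrow> A is determined by act b (the action of basis element b),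
  each act b being linear. By linearity the axioms need only be checked on basis elements.\<close>
definition partial_action ::
  "'b set \<Rightarrow> ('b \<Rightarrow> 'b \<Rightarrow> 'b \<Rightarrow> 'k::field) \<Rightarrow> ('b \<Rightarrow> 'k) \<Rightarrow> ('b \<Rightarrow> 'b \<Rightarrow> 'b \<Rightarrow> 'k)
    \<Rightarrow> ('k \<Rightarrow> 'a::ring_1 \<Rightarrow> 'a) \<Rightarrow> ('b \<Rightarrow> 'a \<Rightarrow> 'a) \<Rightarrow> bool" where
  "partial_action B mult unit comult sm act \<longleftrightarrow>
     (\<forall>b\<in>B. \<forall>a c. act b (a + c) = act b a + act b c) \<and>
     (\<forall>b\<in>B. \<forall>t a. act b (sm t a) = sm t (act b a)) \<and>
     (\<forall>a. (\<Sum>e\<in>B. sm (unit e) (act e a)) = a) \<and>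
     (\<forall>b\<in>B. \<forall>a c. act b (a * c) =
        (\<Sum>b1\<in>B. \<Sum>b2\<in>B. sm (comult b b1 b2) (act b1 a * act b2 c))) \<and>
     (\<forall>b\<in>B. \<forall>k\<in>B. \<forall>a. act b (act k a) =
        (\<Sum>b1\<in>B. \<Sum>b2\<in>B. sm (comult b b1 b2)
            (act b1 1 * (\<Sum>e\<in>B. sm (mult b2 k e) (act e a)))))"

text \<open>The group algebra k C_n, basis g^m (m < n).\<close>
definition cyc_basis :: "nat \<Rightarrow> nat set" where "cyc_basis n = {..<n}"
definition cyc_mult :: "nat \<Rightarrow> nat \<Rightarrow> nat \<Rightarrow> nat \<Rightarrow> 'k::field" where
  "cyc_mult n m l e = (if e = (m + l) mod n then 1 else 0)"
definition cyc_unit :: "nat \<Rightarrow> 'k::field" where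
  "cyc_unit e = (if e = 0 then 1 else 0)"
definition cyc_comult :: "nat \<Rightarrow> nat \<Rightarrow> nat \<Rightarrow> 'k::field" where
  "cyc_comult m b1 b2 = (if b1 = m \<and> b2 = m then 1 else 0)"

text \<open>The Taft algebra T_n(q), basis g^i x^j (i,j < n), encoded as the pair (i,j).
  Multiplication: (g^i x^j)(g^k x^l) = q^(jk) g^(i+k) x^(j+l) (zero if j+l \<ge> n),
  which follows from x g = q g x, g^n = 1, x^n = 0.\<close>
definition taft_basis :: "nat \<Rightarrow> (nat \<times> nat) set" where
  "taft_basis n = {..<n} \<times> {..<n}"
definition taft_mult :: "nat \<Rightarrow> 'k::field \<Rightarrow> nat \<times> nat \<Rightarrow> nat \<times> nat \<Rightarrow> nat \<times> nat \<Rightarrow> 'k" where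
  "taft_mult n q b c e =
     (if e = ((fst b + fst c) mod n, snd b + snd c) then q ^ (snd b * fst c) else 0)"
definition taft_unit :: "nat \<times> nat \<Rightarrow> 'k::field" where
  "taft_unit e = (if e = (0, 0) then 1 else 0)"

text \<open>Comultiplication: \<Delta>(g^i) = g^i \<otimes> g^i, \<Delta>(x) = x \<otimes> 1 + g \<otimes> x, and
  \<Delta>(g^i x^(j+1)) = \<Delta>(g^i x^j) \<Delta>(x) (\<Delta> is an algebra map), the product being taken
  in T_n(q) \<otimes> T_n(q). taft_comult_aux n q i j e1 e2 = coefficient of e1 \<otimes> e2 in \<Delta>(g^i x^j).\<close>
fun taft_comult_aux :: "nat \<Rightarrow> 'k::field \<Rightarrow> nat \<Rightarrow> nat \<Rightarrow> nat \<times> nat \<Rightarrow> nat \<times> nat \<Rightarrow> 'k" where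
  "taft_comult_aux n q i 0 e1 e2 =
     (if e1 = (i mod n, 0) \<and> e2 = (i mod n, 0) then 1 else 0)"
| "taft_comult_aux n q i (Suc j) e1 e2 =
     (\<Sum>b1\<in>taft_basis n. \<Sum>b2\<in>taft_basis n. taft_comult_aux n q i j b1 b2 *
        (taft_mult n q b1 (0, 1) e1 * taft_mult n q b2 (0, 0) e2
         + taft_mult n q b1 (1 mod n, 0) e1 * taft_mult n q b2 (0, 1) e2))"

definition taft_comult :: "nat \<Rightarrow> 'k::field \<Rightarrow> nat \<times> nat \<Rightarrow> nat \<times> nat \<Rightarrow> nat \<times> nat \<Rightarrow> 'k" where
  "taft_comult n q b e1 e2 = taft_comult_aux n q (fst b) (snd b) e1 e2"

fun qbinom :: "'k::field \<Rightarrow> nat \<Rightarrow> nat \<Rightarrow> 'k" where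
  "qbinom p 0 m = (if m = 0 then 1 else 0)"
| "qbinom p (Suc N) 0 = qbinom p N 0"
| "qbinom p (Suc N) (Suc m) = qbinom p N m + p ^ Suc m * qbinom p N (Suc m)"

definition primitive_root :: "nat \<Rightarrow> 'k::field \<Rightarrow> bool" where
  "primitive_root n q \<longleftrightarrow> q ^ n = 1 \<and> (\<forall>m. 0 < m \<and> m < n \<longrightarrow> q ^ m \<noteq> 1)"

definition taft_act :: "nat \<Rightarrow> 'k::field \<Rightarrow> ('k \<Rightarrow> 'a::ring_1 \<Rightarrow> 'a) \<Rightarrow> (nat \<Rightarrow> 'a \<Rightarrow> 'a)
    \<Rightarrow> 'a \<Rightarrow> nat \<times> nat \<Rightarrow> 'a \<Rightarrow> 'a" where
  "taft_act n q sm G w b a =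
     sm (inverse q ^ (fst b * snd b))
       (\<Sum>k = 0..snd b. sm ((-1) ^ k * inverse q ^ (k * (k - 1) div 2) * qbinom (inverse q) (snd b) k)
          (w ^ (snd b - k) * G ((fst b + k) mod n) a * w ^ k))"

end

theory Submission
  imports Defs HOL.Modules
begin

text \<open>
  Write p = q\<inverse> and act i j a for the action of g^i x^j on a. The defining formula is
  equivalent to the recursion act i 0 = g^i \<cdot> _ and
  act i (j + 1) a = p^i (w act i j a - act (i + 1) j a w): x acts as a twisted commutator with w.
  Any three families obeying this recursion satisfy a q-Leibniz rule whose coefficients are those
  of \<Delta>(g^i x^j) = \<Sum>_k [j, k]_q g^(i+k) x^(j-k) \<otimes> g^i x^k; this gives both the
  multiplicativity and the composition axiom. The relation x^n = 0 is respected because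
  [n, k]_p vanishes for 0 < k < n, which leaves w^n a - a w^n = 0. The hypothesis on g^i \<cdot> w
  lets g^i \<cdot> 1 absorb w, so that g^i \<cdot> _ commutes with the recursion.
\<close>

section \<open>Gaussian binomial coefficients\<close>

lemma qbinom_0_right [simp]: "qbinom p N 0 = 1"
  by (induction N) auto

lemma qbinom_eq_0: "N < m \<Longrightarrow> qbinom p N m = 0"
proof (induction N arbitrary: m)
  case (Suc N)
  then show ?case by (cases m) auto
qed simp

lemma qbinom_self [simp]: "qbinom p N N = 1"
  by (induction N) (auto simp: qbinom_eq_0)

lemma qbinom_Suc_Suc':
  "qbinom p (Suc N) (Suc m) = p ^ (N - m) * qbinom p N m + qbinom p N (Suc m)"
proof (induction N arbitrary: m)
  case (Suc N)
  show ?case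
  proof (cases m)
    case 0
    then show ?thesis using Suc.IH[of 0] by (simp add: algebra_simps)
  next
    case (Suc m')
    have key: "p ^ Suc m * (p ^ (N - m) * qbinom p N m) = p ^ (N - m') * (p ^ m * qbinom p N m)"
    proof (cases "m \<le> N")
      case True
      then have "Suc m + (N - m) = (N - m') + m" using Suc by arith
      then have "p ^ Suc m * p ^ (N - m) = p ^ (N - m') * p ^ m"
        by (metis power_add)
      then show ?thesis by (metis mult.assoc)
    qed (simp add: qbinom_eq_0)
    have "qbinom p (Suc (Suc N)) (Suc m)
        = qbinom p (Suc N) m + p ^ Suc m * qbinom p (Suc N) (Suc m)"
      by (rule qbinom.simps(3))
    also have "\<dots> = (p ^ (N - m') * qbinom p N m' + qbinom p N m)
        + p ^ Suc m * (p ^ (N - m) * qbinom p N m + qbinom p N (Suc m))"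
      by (simp only: Suc Suc.IH)
    also have "\<dots> = p ^ (N - m') * (qbinom p N m' + p ^ m * qbinom p N m)
        + (qbinom p N m + p ^ Suc m * qbinom p N (Suc m))"
      by (simp only: distrib_left key add_ac)
    also have "\<dots> = p ^ (Suc N - m) * qbinom p (Suc N) m + qbinom p (Suc N) (Suc m)"
      by (simp add: Suc)
    finally show ?thesis .
  qed
qed simp

lemma qbinom_absorption:
  "(1 - p ^ Suc m) * qbinom p (Suc N) (Suc m) = (1 - p ^ Suc N) * qbinom p N m"
proof (cases "m \<le> N")
  case True
  then have "p ^ Suc m * p ^ (N - m) = p ^ Suc N"
    by (simp flip: power_add)
  then have "p ^ Suc m * qbinom p (Suc N) (Suc m)
      = p ^ Suc N * qbinom p N m + p ^ Suc m * qbinom p N (Suc m)"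
    by (simp only: qbinom_Suc_Suc' distrib_left mult.assoc [symmetric])
  then show ?thesis by (simp add: algebra_simps)
qed (simp add: qbinom_eq_0)

lemma qbinom_root_of_unity:
  assumes "p ^ N = 1" and "p ^ k \<noteq> 1"
  shows "qbinom p N k = 0"
proof (cases "N < k")
  case False
  with assms obtain N' m where "N = Suc N'" and "k = Suc m"
    by (cases N; cases k) auto
  then have "(1 - p ^ k) * qbinom p N k = 0"
    using qbinom_absorption[of p m N'] assms(1) by simp
  with assms(2) show ?thesis by simp
qed (simp add: qbinom_eq_0)

lemma primitive_root_inverse: "primitive_root n q \<Longrightarrow> primitive_root n (inverse q)"
  by (simp add: primitive_root_def power_inverse)

lemma primitive_root_power_mod:
  assumes "primitive_root n p"
  shows "p ^ (i mod n) = p ^ i"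
proof -
  have "p ^ i = (p ^ n) ^ (i div n) * p ^ (i mod n)"
    by (subst mult_div_mod_eq [of n i, symmetric]) (simp only: power_add power_mult)
  with assms show ?thesis by (simp add: primitive_root_def)
qed

lemma primitive_root_triangular_power:
  assumes "2 \<le> n" and "primitive_root n p"
  shows "(-1) ^ n * p ^ (n * (n - 1) div 2) = -1"
proof (cases "even n")
  case False
  then have "n * (n - 1) div 2 = n * ((n - 1) div 2)"
    by (simp add: div_mult_swap)
  with assms(2) have "p ^ (n * (n - 1) div 2) = 1"
    by (simp add: primitive_root_def power_mult)
  with False show ?thesis by simp
next
  case True
  then obtain m where m: "n = 2 * m" by blast
  with assms(1) have "0 < m" "m < n" by auto
  moreover have "(p ^ m) ^ 2 = 1"
    using assms(2) m by (simp add: primitive_root_def mult.commute flip: power_mult)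
  ultimately have "p ^ m = -1"
    using assms(2) by (auto simp: primitive_root_def power2_eq_1_iff)
  then have "p ^ (n * (n - 1) div 2) = (-1) ^ (n - 1)"
    using m by (simp add: power_mult)
  moreover have "odd (n - 1)" using True assms(1) by simp
  ultimately show ?thesis using True by simp
qed

definition signed_qbinom :: "'k::field \<Rightarrow> nat \<Rightarrow> nat \<Rightarrow> 'k" where
  "signed_qbinom p j k = (-1) ^ k * p ^ (k * (k - 1) div 2) * qbinom p j k"

lemma signed_qbinom_0_right [simp]: "signed_qbinom p j 0 = 1"
  by (simp add: signed_qbinom_def)

lemma signed_qbinom_eq_0: "j < k \<Longrightarrow> signed_qbinom p j k = 0"
  by (simp add: signed_qbinom_def qbinom_eq_0)

lemma signed_qbinom_Suc_Suc:
  assumes "k \<le> j"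
  shows "signed_qbinom p (Suc j) (Suc k) = signed_qbinom p j (Suc k) - p ^ j * signed_qbinom p j k"
proof -
  have "Suc k * k div 2 + (j - k) = j + k * (k - 1) div 2"
    using assms by (cases k) auto
  then have "p ^ (Suc k * k div 2) * p ^ (j - k) = p ^ j * p ^ (k * (k - 1) div 2)"
    by (metis power_add)
  then show ?thesis
    unfolding signed_qbinom_def qbinom_Suc_Suc' by (simp add: algebra_simps)
qed

lemma sum_atMost_Suc_pascal:
  fixes t g h :: "nat \<Rightarrow> 'b::comm_monoid_add"
  assumes "t 0 = g 0" and "\<And>k. k \<le> j \<Longrightarrow> t (Suc k) = g (Suc k) + h k"
    and "g (Suc j) = 0"
  shows "(\<Sum>k\<le>Suc j. t k) = (\<Sum>k\<le>j. g k + h k)"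
proof -
  have "(\<Sum>k\<le>Suc j. t k) = g 0 + (\<Sum>k\<le>j. g (Suc k)) + (\<Sum>k\<le>j. h k)"
    using assms(1,2) by (subst sum.atMost_Suc_shift) (simp add: sum.distrib add.assoc)
  also have "g 0 + (\<Sum>k\<le>j. g (Suc k)) = (\<Sum>k\<le>j. g k)"
    using assms(3) by (simp flip: sum.atMost_Suc_shift)
  finally show ?thesis by (simp add: sum.distrib)
qed

lemma sum_sum_delta:
  assumes "finite A" and "finite B" and "x \<in> A" and "y \<in> B"
  shows "(\<Sum>a\<in>A. \<Sum>b\<in>B. if a = x \<and> b = y then f a b else 0) = f x y"
proof -
  have "(\<Sum>b\<in>B. if a = x \<and> b = y then f a b else 0) = (if a = x then f a y else 0)" for a
    using assms(2,4) by (cases "a = x") simp_all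
  then show ?thesis using assms(1,3) by (simp add: sum.delta')
qed

lemma sum_sum_sum_delta:
  assumes "finite A" and "finite B" and "\<And>k. k \<in> K \<Longrightarrow> f k \<in> A \<and> g k \<in> B"
  shows "(\<Sum>a\<in>A. \<Sum>b\<in>B. \<Sum>k\<in>K. if a = f k \<and> b = g k then c k a b else 0)
       = (\<Sum>k\<in>K. c k (f k) (g k))"
proof -
  have "(\<Sum>a\<in>A. \<Sum>b\<in>B. \<Sum>k\<in>K. if a = f k \<and> b = g k then c k a b else 0)
      = (\<Sum>k\<in>K. \<Sum>a\<in>A. \<Sum>b\<in>B. if a = f k \<and> b = g k then c k a b else 0)"
    by (subst sum.swap) (rule sum.cong [OF refl], rule sum.swap)
  also have "\<dots> = (\<Sum>k\<in>K. c k (f k) (g k))"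
    using assms by (intro sum.cong refl sum_sum_delta) auto
  finally show ?thesis .
qed

section \<open>Twisted commutator recursions\<close>

locale algebra_scalars = module sm for sm :: "'k::field \<Rightarrow> 'a::ring_1 \<Rightarrow> 'a" +
  assumes scale_mult_left: "sm s a * b = sm s (a * b)"
    and scale_mult_right: "a * sm s b = sm s (a * b)"

lemma kalgebra_imp_algebra_scalars: "kalgebra sm \<Longrightarrow> algebra_scalars sm"
  unfolding kalgebra_def by unfold_locales auto

context algebra_scalars
begin

lemma scale_if_zero: "sm (if P then s else 0) a = (if P then sm s a else 0)"
  by simp

definition skew_binomial_sum :: "'k \<Rightarrow> 'a \<Rightarrow> nat \<Rightarrow> (nat \<Rightarrow> 'a) \<Rightarrow> 'a" where
  "skew_binomial_sum p w j H = (\<Sum>k\<le>j. sm (signed_qbinom p j k) (w ^ (j - k) * H k * w ^ k))"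

lemma skew_binomial_sum_Suc:
  "skew_binomial_sum p w (Suc j) H =
     w * skew_binomial_sum p w j H - sm (p ^ j) (skew_binomial_sum p w j (\<lambda>k. H (Suc k)) * w)"
proof -
  define T where "T N k H' = w ^ (N - k) * H' k * w ^ k" for N k H'
  define t where "t k = sm (signed_qbinom p (Suc j) k) (T (Suc j) k H)" for k
  define g where "g k = w * sm (signed_qbinom p j k) (T j k H)" for k
  define h where
    "h k = - sm (p ^ j) (sm (signed_qbinom p j k) (T j k (\<lambda>k. H (Suc k))) * w)" for k
  have "skew_binomial_sum p w (Suc j) H = (\<Sum>k\<le>Suc j. t k)"
    by (simp add: skew_binomial_sum_def t_def T_def)
  also have "\<dots> = (\<Sum>k\<le>j. g k + h k)"
  proof (rule sum_atMost_Suc_pascal)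
    show "t 0 = g 0" unfolding t_def g_def T_def by (simp add: mult.assoc)
    show "g (Suc j) = 0" unfolding g_def by (simp add: signed_qbinom_eq_0)
    fix k assume k: "k \<le> j"
    have "T (Suc j) (Suc k) H = T j k (\<lambda>k. H (Suc k)) * w"
      unfolding T_def by (simp add: power_commutes mult.assoc)
    moreover have "sm (signed_qbinom p j (Suc k)) (T (Suc j) (Suc k) H)
        = w * sm (signed_qbinom p j (Suc k)) (T j (Suc k) H)"
    proof (cases "Suc k \<le> j")
      case True
      then have "Suc j - Suc k = Suc (j - Suc k)" by simp
      then show ?thesis unfolding T_def by (simp add: scale_mult_right mult.assoc)
    qed (simp add: signed_qbinom_eq_0)
    ultimately show "t (Suc k) = g (Suc k) + h k"
      unfolding t_def g_def h_def signed_qbinom_Suc_Suc [OF k] scale_left_diff_distrib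
      by (simp add: scale_mult_left)
  qed
  also have "\<dots> = w * skew_binomial_sum p w j H
      - sm (p ^ j) (skew_binomial_sum p w j (\<lambda>k. H (Suc k)) * w)"
    unfolding skew_binomial_sum_def g_def h_def T_def
    by (simp add: sum.distrib sum_distrib_left sum_distrib_right scale_sum_right sum_subtractf)
  finally show ?thesis .
qed

definition skew_recursive :: "'k \<Rightarrow> 'a \<Rightarrow> (nat \<Rightarrow> nat \<Rightarrow> 'a) \<Rightarrow> bool" where
  "skew_recursive p w U \<longleftrightarrow> (\<forall>i j. U i (Suc j) = sm (p ^ i) (w * U i j - U (Suc i) j * w))"

lemma skew_recursiveD:
  "skew_recursive p w U \<Longrightarrow> U i (Suc j) = sm (p ^ i) (w * U i j - U (Suc i) j * w)"
  by (simp add: skew_recursive_def)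

lemma skew_recursive_product_step:
  assumes "p * q = 1" and U: "skew_recursive p w U" and F: "skew_recursive p w F"
  shows "sm (q ^ k) (U (i + k) (Suc m) * F i k) + U (Suc (i + k)) m * F i (Suc k)
       = sm (p ^ i) (w * U (i + k) m * F i k - U (Suc (i + k)) m * F (Suc i) k * w)"
proof -
  have "q ^ k * p ^ (i + k) = (p * q) ^ k * p ^ i"
    by (simp add: power_add power_mult_distrib mult_ac)
  with assms(1) have "q ^ k * p ^ (i + k) = p ^ i" by simp
  then have "sm (q ^ k) (U (i + k) (Suc m) * F i k)
      = sm (p ^ i) (w * U (i + k) m * F i k - U (Suc (i + k)) m * w * F i k)"
    using skew_recursiveD [OF U] by (simp add: scale_mult_left left_diff_distrib)
  moreover have "U (Suc (i + k)) m * F i (Suc k)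
      = sm (p ^ i) (U (Suc (i + k)) m * w * F i k - U (Suc (i + k)) m * F (Suc i) k * w)"
    using skew_recursiveD [OF F] by (simp add: scale_mult_right right_diff_distrib mult.assoc)
  ultimately show ?thesis by (simp add: scale_right_distrib [symmetric])
qed

lemma skew_recursive_leibniz:
  assumes "p * q = 1" and Phi: "skew_recursive p w Phi"
    and U: "skew_recursive p w U" and F: "skew_recursive p w F"
    and base: "\<And>i. Phi i 0 = U i 0 * F i 0"
  shows "Phi i j = (\<Sum>k\<le>j. sm (qbinom q j k) (U (i + k) (j - k) * F i k))"
proof (induction j arbitrary: i)
  case 0
  show ?case by (simp add: base)
next
  case (Suc j)
  define t where "t k = sm (qbinom q (Suc j) k) (U (i + k) (Suc j - k) * F i k)" for k
  define g where "g k = sm (qbinom q j k) (sm (q ^ k) (U (i + k) (Suc j - k) * F i k))" for k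
  define h where "h k = sm (qbinom q j k) (U (Suc (i + k)) (j - k) * F i (Suc k))" for k
  have "(\<Sum>k\<le>Suc j. t k) = (\<Sum>k\<le>j. g k + h k)"
    by (rule sum_atMost_Suc_pascal)
       (simp_all add: t_def g_def h_def qbinom_eq_0 scale_left_distrib mult.commute add.commute)
  also have "\<dots> = (\<Sum>k\<le>j. sm (p ^ i) (sm (qbinom q j k)
      (w * U (i + k) (j - k) * F i k - U (Suc (i + k)) (j - k) * F (Suc i) k * w)))"
  proof (rule sum.cong [OF refl])
    fix k assume "k \<in> {..j}"
    then have "Suc j - k = Suc (j - k)" by simp
    then show "g k + h k = sm (p ^ i) (sm (qbinom q j k)
        (w * U (i + k) (j - k) * F i k - U (Suc (i + k)) (j - k) * F (Suc i) k * w))"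
      unfolding g_def h_def scale_right_distrib [symmetric]
      by (simp add: skew_recursive_product_step [OF assms(1) U F] mult.commute)
  qed
  also have "\<dots> = sm (p ^ i) (w * Phi i j - Phi (Suc i) j * w)"
    unfolding Suc.IH
    by (simp add: scale_sum_right scale_right_diff_distrib sum_subtractf sum_distrib_left
        sum_distrib_right scale_mult_left scale_mult_right mult.assoc)
  finally show ?case using skew_recursiveD [OF Phi] by (simp add: t_def)
qed

end

section \<open>The comultiplication of the Taft algebra\<close>

lemma mem_taft_basis [simp]: "(x, y) \<in> taft_basis n \<longleftrightarrow> x < n \<and> y < n"
  by (simp add: taft_basis_def)

lemma finite_taft_basis [simp]: "finite (taft_basis n)"
  by (simp add: taft_basis_def)

lemma Ball_taft_basis: "(\<forall>b\<in>taft_basis n. P b) \<longleftrightarrow> (\<forall>i<n. \<forall>j<n. P (i, j))"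
  by (auto simp: taft_basis_def)

lemma taft_comult_aux_eq:
  assumes "2 \<le> n" and "i < n" and "j < n"
  shows "taft_comult_aux n q i j e1 e2
       = (\<Sum>k\<le>j. if e1 = ((i + k) mod n, j - k) \<and> e2 = (i, k) then qbinom q j k else 0)"
  using assms(3)
proof (induction j arbitrary: e1 e2)
  case 0
  then show ?case unfolding atMost_0 using assms(2) by simp
next
  case (Suc j)
  define M where "M b1 b2 = taft_mult n q b1 (0, 1) e1 * taft_mult n q b2 (0, 0) e2
      + taft_mult n q b1 (1 mod n, 0) e1 * taft_mult n q b2 (0, 1) e2" for b1 b2
  define c where "c k \<longleftrightarrow> e1 = ((i + k) mod n, Suc j - k) \<and> e2 = (i, k)" for k
  have M: "M ((i + k) mod n, j - k) (i, k)
      = (if c k then 1 else 0) + (if c (Suc k) then q ^ (j - k) else 0)" if "k \<le> j" for k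
  proof -
    have "1 mod n = 1" "Suc ((i + k) mod n) mod n = Suc (i + k) mod n"
      using assms(1) by (simp_all add: mod_Suc_eq)
    then show ?thesis
      using that assms(2) by (simp add: M_def c_def taft_mult_def Suc_diff_le)
  qed
  have if_times: "(if P then x else 0) * y = (if P then x * y else 0)" for P and x y :: 'a
    by simp
  have "taft_comult_aux n q i (Suc j) e1 e2
      = (\<Sum>b1\<in>taft_basis n. \<Sum>b2\<in>taft_basis n. \<Sum>k\<le>j.
          if b1 = ((i + k) mod n, j - k) \<and> b2 = (i, k) then qbinom q j k * M b1 b2 else 0)"
    using Suc by (simp add: M_def sum_distrib_right if_times cong: if_cong)
  also have "\<dots> = (\<Sum>k\<le>j. qbinom q j k * M ((i + k) mod n, j - k) (i, k))"
    using Suc.prems assms(2) by (intro sum_sum_sum_delta) auto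
  also have "\<dots> = (\<Sum>k\<le>j. (if c k then qbinom q j k else 0)
      + (if c (Suc k) then q ^ (j - k) * qbinom q j k else 0))"
    by (intro sum.cong refl) (simp add: M distrib_left mult.commute)
  also have "\<dots> = (\<Sum>k\<le>Suc j. if c k then qbinom q (Suc j) k else 0)"
    by (rule sum_atMost_Suc_pascal [symmetric])
       (simp_all add: qbinom_Suc_Suc' qbinom_eq_0 add.commute del: qbinom.simps(3))
  finally show ?case by (simp add: c_def)
qed

context algebra_scalars
begin

lemma sum_taft_comult:
  assumes "2 \<le> n" and "i < n" and "j < n"
  shows "(\<Sum>b1\<in>taft_basis n. \<Sum>b2\<in>taft_basis n. sm (taft_comult n q (i, j) b1 b2) (Psi b1 b2))
       = (\<Sum>k\<le>j. sm (qbinom q j k) (Psi ((i + k) mod n, j - k) (i, k)))"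
proof -
  have "(\<Sum>b1\<in>taft_basis n. \<Sum>b2\<in>taft_basis n. sm (taft_comult n q (i, j) b1 b2) (Psi b1 b2))
      = (\<Sum>b1\<in>taft_basis n. \<Sum>b2\<in>taft_basis n. \<Sum>k\<le>j.
          if b1 = ((i + k) mod n, j - k) \<and> b2 = (i, k) then sm (qbinom q j k) (Psi b1 b2) else 0)"
    using assms by (simp add: taft_comult_def taft_comult_aux_eq scale_sum_left scale_if_zero)
  also have "\<dots> = (\<Sum>k\<le>j. sm (qbinom q j k) (Psi ((i + k) mod n, j - k) (i, k)))"
    using assms by (intro sum_sum_sum_delta) auto
  finally show ?thesis .
qed

end

section \<open>Partial actions of the cyclic group algebra\<close>

locale cyclic_partial_action = algebra_scalars sm
  for sm :: "'k::field \<Rightarrow> 'a::ring_1 \<Rightarrow> 'a" +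
  fixes n :: nat and G :: "nat \<Rightarrow> 'a \<Rightarrow> 'a"
  assumes n_pos: "0 < n"
    and partial_action: "partial_action (cyc_basis n) (cyc_mult n) cyc_unit cyc_comult sm G"
begin

lemma G_add: "i < n \<Longrightarrow> G i (a + c) = G i a + G i c"
  and G_scale: "i < n \<Longrightarrow> G i (sm t a) = sm t (G i a)"
  using partial_action by (simp_all add: partial_action_def cyc_basis_def)

lemma G_diff:
  assumes "i < n"
  shows "G i (a - c) = G i a - G i c"
proof -
  interpret additive "G i"
    by standard (rule G_add [OF assms])
  show ?thesis by (rule diff)
qed

lemma G_0: "G 0 a = a"
  using partial_action n_pos
  by (simp add: partial_action_def cyc_basis_def cyc_unit_def scale_if_zero)

lemma G_mult: "i < n \<Longrightarrow> G i (a * c) = G i a * G i c"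
  using partial_action
  by (simp add: partial_action_def cyc_basis_def cyc_comult_def scale_if_zero sum_sum_delta)

lemma G_G:
  assumes "i < n" and "k < n"
  shows "G i (G k a) = G i 1 * G ((i + k) mod n) a"
  using partial_action assms n_pos
  by (simp add: partial_action_def cyc_basis_def cyc_comult_def cyc_mult_def scale_if_zero
      sum_sum_delta)

end

section \<open>The action of the Taft algebra\<close>

locale taft_setting = cyclic_partial_action sm n G
  for sm :: "'k::field \<Rightarrow> 'a::ring_1 \<Rightarrow> 'a" and n G +
  fixes q :: 'k and w :: 'a
  assumes two_le_n: "2 \<le> n"
    and primitive: "primitive_root n q"
    and w_pow_central: "w ^ n * a = a * w ^ n"
    and G_w: "i < n \<Longrightarrow> G i w = sm (inverse q ^ i) (G i 1 * w)"
begin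

abbreviation p :: 'k where "p \<equiv> inverse q"

abbreviation act :: "nat \<Rightarrow> nat \<Rightarrow> 'a \<Rightarrow> 'a" where
  "act i j \<equiv> taft_act n q sm G w (i, j)"

lemma p_times_q: "p * q = 1"
proof -
  have "q \<noteq> 0"
    using primitive n_pos by (auto simp: primitive_root_def power_0_left)
  then show ?thesis by simp
qed

lemma primitive_p: "primitive_root n p"
  using primitive by (rule primitive_root_inverse)

lemma act_eq_skew_binomial_sum:
  "act i j a = sm (p ^ (i * j)) (skew_binomial_sum p w j (\<lambda>k. G ((i + k) mod n) a))"
  by (simp add: taft_act_def skew_binomial_sum_def signed_qbinom_def atLeast0AtMost)

lemma act_0: "act i 0 a = G (i mod n) a"
  by (simp add: act_eq_skew_binomial_sum skew_binomial_sum_def)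

lemma act_Suc: "act i (Suc j) a = sm (p ^ i) (w * act i j a - act (Suc i) j a * w)"
  unfolding act_eq_skew_binomial_sum skew_binomial_sum_Suc
  by (simp add: scale_right_diff_distrib scale_mult_left scale_mult_right power_add mult_ac)

lemma skew_recursive_act: "skew_recursive p w (\<lambda>i j. act i j a)"
  by (simp add: skew_recursive_def act_Suc)

lemma act_mod: "act (i mod n) j a = act i j a"
proof -
  have "p ^ (i mod n * j) = p ^ (i * j)"
    using primitive_root_power_mod [OF primitive_p]
    by (simp add: power_mult)
  then show ?thesis
    by (simp add: act_eq_skew_binomial_sum mod_add_left_eq)
qed

lemma act_add: "act i j (a + c) = act i j a + act i j c"
proof (induction j arbitrary: i)
  case 0
  then show ?case by (simp add: act_0 G_add n_pos)
next
  case (Suc j)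
  have "w * (x + y) - (u + v) * w = (w * x - u * w) + (w * y - v * w)" for x y u v :: 'a
    by (simp add: algebra_simps)
  then show ?case by (simp only: act_Suc Suc.IH scale_right_distrib)
qed

lemma act_scale: "act i j (sm t a) = sm t (act i j a)"
  by (induction j arbitrary: i)
     (simp_all add: act_0 G_scale n_pos act_Suc scale_mult_left scale_mult_right
       scale_right_diff_distrib mult.commute)

lemma act_n: "act i n a = 0"
proof -
  have "signed_qbinom p n k = 0" if "0 < k" and "k < n" for k
    using that primitive_p
    by (simp add: signed_qbinom_def qbinom_root_of_unity primitive_root_def)
  then have "skew_binomial_sum p w n (\<lambda>k. G ((i + k) mod n) a)
      = (\<Sum>k\<in>{0, n}. sm (signed_qbinom p n k) (w ^ (n - k) * G ((i + k) mod n) a * w ^ k))"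
    unfolding skew_binomial_sum_def by (intro sum.mono_neutral_right) auto
  also have "\<dots> = w ^ n * G (i mod n) a - G (i mod n) a * w ^ n"
    using two_le_n
      primitive_root_triangular_power [OF two_le_n primitive_p]
    by (simp add: signed_qbinom_def)
  finally show ?thesis
    by (simp add: act_eq_skew_binomial_sum w_pow_central)
qed

lemma act_eq_0: "n \<le> j \<Longrightarrow> act i j a = 0"
proof (induction j arbitrary: i rule: dec_induct)
  case base
  then show ?case by (rule act_n)
next
  case (step j)
  then show ?case by (simp add: act_Suc)
qed

lemma G_act: "G (i mod n) (act l m a) = G (i mod n) 1 * act (i + l) m a"
proof (induction m arbitrary: l)
  case 0
  show ?case using n_pos by (simp add: act_0 G_G mod_add_eq)
next
  case (Suc m)
  define i' where "i' = i mod n"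
  define e where "e = G i' 1"
  have i': "i' < n" using n_pos by (simp add: i'_def)
  have IH: "G i' (act l' m a) = e * act (i + l') m a" for l'
    using Suc.IH by (simp add: i'_def e_def)
  have p_i': "p ^ i' = p ^ i"
    unfolding i'_def by (rule primitive_root_power_mod [OF primitive_p])
  have Gw: "G i' w = sm (p ^ i') (e * w)"
    using G_w [OF i'] by (simp add: e_def)
  have right_unit: "G i' y * e = G i' y" for y
    using G_mult [OF i', of y 1] by (simp add: e_def)
  \<comment> \<open>e is a right unit on the image of G i', which by G_w contains e * w up to a scalar.\<close>
  have ewe: "e * w * e = e * w"
  proof -
    have "q ^ i' * p ^ i' = 1"
      using p_times_q by (simp add: mult.commute flip: power_mult_distrib)
    moreover have "sm (p ^ i') (e * w * e) = sm (p ^ i') (e * w)"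
      using right_unit [of w] by (simp add: Gw scale_mult_left)
    then have "sm (q ^ i') (sm (p ^ i') (e * w * e)) = sm (q ^ i') (sm (p ^ i') (e * w))"
      by simp
    ultimately show ?thesis by simp
  qed
  have "G i' (act l (Suc m) a)
      = sm (p ^ l) (G i' w * G i' (act l m a) - G i' (act (Suc l) m a) * G i' w)"
    by (simp add: act_Suc G_scale G_diff G_mult i')
  also have "\<dots> = sm (p ^ l) (sm (p ^ i') (e * w * e * act (i + l) m a)
      - sm (p ^ i') (G i' (act (Suc l) m a) * e * w))"
    by (simp add: IH Gw scale_mult_left scale_mult_right mult.assoc)
  also have "\<dots> = sm (p ^ l) (sm (p ^ i') (e * w * act (i + l) m a)
      - sm (p ^ i') (e * act (Suc (i + l)) m a * w))"
    by (simp only: ewe right_unit) (simp only: IH add_Suc_right)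
  also have "\<dots> = e * act (i + l) (Suc m) a"
    by (simp add: p_i' act_Suc right_diff_distrib scale_right_diff_distrib scale_mult_right
        mult.assoc mult.commute power_add)
  finally show ?case by (simp add: i'_def e_def)
qed

lemma sum_taft_mult_act:
  assumes "i < n" and "l < n"
  shows "(\<Sum>e\<in>taft_basis n. sm (taft_mult n q (i, r) (l, m) e) (taft_act n q sm G w e a))
       = sm (q ^ (r * l)) (act (i + l) (r + m) a)"
  using n_pos by (simp add: taft_mult_def scale_if_zero act_mod act_eq_0)

lemma sum_taft_unit_act: "(\<Sum>e\<in>taft_basis n. sm (taft_unit e) (taft_act n q sm G w e a)) = a"
  using n_pos by (simp add: taft_unit_def scale_if_zero act_0 G_0)

lemma act_mult:
  assumes "i < n" and "j < n"
  shows "act i j (a * c) = (\<Sum>b1\<in>taft_basis n. \<Sum>b2\<in>taft_basis n.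
           sm (taft_comult n q (i, j) b1 b2) (taft_act n q sm G w b1 a * taft_act n q sm G w b2 c))"
proof -
  have "act i j (a * c) = (\<Sum>k\<le>j. sm (qbinom q j k) (act (i + k) (j - k) a * act i k c))"
    by (rule skew_recursive_leibniz [OF p_times_q skew_recursive_act skew_recursive_act
        skew_recursive_act]) (simp add: act_0 G_mult n_pos)
  also have "\<dots> = (\<Sum>b1\<in>taft_basis n. \<Sum>b2\<in>taft_basis n.
      sm (taft_comult n q (i, j) b1 b2) (taft_act n q sm G w b1 a * taft_act n q sm G w b2 c))"
    using assms by (simp add: sum_taft_comult [OF two_le_n] act_mod)
  finally show ?thesis .
qed

lemma act_act:
  assumes "i < n" and "j < n" and "l < n"
  shows "act i j (act l m a) = (\<Sum>b1\<in>taft_basis n. \<Sum>b2\<in>taft_basis n.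
           sm (taft_comult n q (i, j) b1 b2) (taft_act n q sm G w b1 1 *
             (\<Sum>e\<in>taft_basis n. sm (taft_mult n q b2 (l, m) e) (taft_act n q sm G w e a))))"
proof -
  \<comment> \<open>F i r is the action of (g^i x^r)(g^l x^m) = q^(r l) g^(i+l) x^(r+m) on a.\<close>
  define F where "F i r = sm (q ^ (r * l)) (act (i + l) (r + m) a)" for i r
  have "p ^ (i + l) * q ^ (l + l * r) = p ^ i * q ^ (l * r)" for i r
    using p_times_q by (simp add: power_add mult_ac flip: power_mult_distrib)
  then have "skew_recursive p w F"
    by (simp add: skew_recursive_def F_def act_Suc scale_mult_left scale_mult_right
        scale_right_diff_distrib mult.commute)
  then have "act i j (act l m a)
      = (\<Sum>r\<le>j. sm (qbinom q j r) (act (i + r) (j - r) 1 * F i r))"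
    by (rule skew_recursive_leibniz [OF p_times_q skew_recursive_act skew_recursive_act])
       (simp add: act_0 F_def G_act)
  also have "\<dots> = (\<Sum>b1\<in>taft_basis n. \<Sum>b2\<in>taft_basis n.
      sm (taft_comult n q (i, j) b1 b2) (taft_act n q sm G w b1 1 *
        (\<Sum>e\<in>taft_basis n. sm (taft_mult n q b2 (l, m) e) (taft_act n q sm G w e a))))"
    using assms by (simp add: sum_taft_comult [OF two_le_n] sum_taft_mult_act act_mod F_def)
  finally show ?thesis .
qed

lemma partial_action_taft_act:
  "partial_action (taft_basis n) (taft_mult n q) taft_unit (taft_comult n q) sm (taft_act n q sm G w)"
  unfolding partial_action_def Ball_taft_basis
  by (simp add: act_add act_scale sum_taft_unit_act act_mult act_act)

end

theorem proposition3p7: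
  fixes n :: nat and q :: "'k::field" and sm :: "'k \<Rightarrow> 'a::ring_1 \<Rightarrow> 'a"
    and G :: "nat \<Rightarrow> 'a \<Rightarrow> 'a" and w :: 'a
  assumes "n \<ge> 2"
    and "primitive_root n q"
    and "kalgebra sm"
    and "partial_action (cyc_basis n) (cyc_mult n) cyc_unit cyc_comult sm G"
    and "G 1 1 = 0"
    and "\<forall>a. w ^ n * a = a * w ^ n"
    and "\<forall>i < n. G i w = sm (inverse q ^ i) (G i 1 * w)"
  shows "partial_action (taft_basis n) (taft_mult n q) taft_unit (taft_comult n q) sm
           (taft_act n q sm G w)"
proof -
  interpret algebra_scalars sm
    using assms(3) by (rule kalgebra_imp_algebra_scalars)
  interpret taft_setting sm n G q w
    using assms(1,2,4,6,7) by unfold_locales auto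
  show ?thesis by (rule partial_action_taft_act)
qed

end
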